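(* Let $q$ be a power of an odd prime, $0<r_1<r_2<\cdots<r_k<n$ integers, $a_1,\dots,a_k\in\mathbb{F}_{q^n}^*$, $S(x)=\sum_{i=1}^k a_ix^{q^{r_i}}$, and $0<t<n$. (1) If $0<t<r_1$ and the multiplicative order of each $a_i$ ($i=1,\dots,k$) divides $q^t-1$, then $S(x)$ is a scattered polynomial of index $t$ over $\mathbb{F}_{q^n}$ if and only if $S^t(x)=\sum_{i=1}^k a_ix^{q^{r_i-t}}$ is a scattered polynomial of index $0$ over $\mathbb{F}_{q^n}$. (2) If $r_1<t<n$ and the multiplicative order of each $a_i$ ($i=1,\dots,k$) divides $q^{r_1}-1$, then $S(x)$ is a scattered polynomial of index $t$ over $\mathbb{F}_{q^n}$ if and only if $T(x)=a_1x+\sum_{i=2}^k a_ix^{q^{r_i-r_1}}$ is a scattered polynomial of index $t-r_1$ over $\mathbb{F}_{q^n}$.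
   Context: An $\mathbb{F}_q$-linearized polynomial $S\in\mathbb{F}_{q^n}[x]$ is a scattered polynomial of index $t$ over $\mathbb{F}_{q^n}$ if for all $y,z\in\mathbb{F}_{q^n}^*$, $\frac{S(y)}{y^{q^t}}=\frac{S(z)}{z^{q^t}}$ implies $y/z\in\mathbb{F}_q$. *)

theory Defs
  imports "HOL-Computational_Algebra.Primes"
begin

text \<open>The ambient field F_{q^n} is a finite field type 'a with CARD('a) = q^n.
  The subfield F_q is the set of elements fixed by x |-> x^q.\<close>

definition in_Fq :: "nat \<Rightarrow> 'a::field \<Rightarrow> bool" where
  "in_Fq q x \<longleftrightarrow> x ^ q = x"

definition mult_ord :: "'a::field \<Rightarrow> nat" where
  "mult_ord a = (LEAST d. 0 < d \<and> a ^ d = 1)"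

definition scattered :: "nat \<Rightarrow> nat \<Rightarrow> ('a::field \<Rightarrow> 'a) \<Rightarrow> bool" where
  "scattered q t S \<longleftrightarrow>
     (\<forall>y z. y \<noteq> 0 \<longrightarrow> z \<noteq> 0 \<longrightarrow> S y / y ^ (q ^ t) = S z / z ^ (q ^ t)
        \<longrightarrow> in_Fq q (y / z))"

end

theory Submission
  imports Defs "HOL-Number_Theory.Residues"
begin

text \<open>
  Put \<open>s = t\<close> in (1) and \<open>s = r\<^sub>1\<close> in (2). The coefficients are fixed by
  \<open>x \<mapsto> x^(q^s)\<close>, an injective additive map, so \<open>S = S'^(q^s)\<close> pointwise for the shifted
  polynomial \<open>S'\<close> (\<open>S\<^sup>t\<close> resp. \<open>T\<close>). Hence \<open>S(y)/y^(q^t) = (S'(y)/y^(q^(t-s)))^(q^s)\<close>,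
  and injectivity turns scatteredness of \<open>S\<close> of index \<open>t\<close> into that of \<open>S'\<close> of index
  \<open>t - s\<close>.
\<close>

lemma CHAR_eq_prime_of_card_eq_power:
  assumes "prime p" and "card (UNIV :: 'a::{field,finite} set) = p ^ e"
  shows "CHAR('a) = p"
proof -
  have "prime CHAR('a)"
    by (intro prime_CHAR_semidom finite_imp_CHAR_pos) simp
  moreover have "CHAR('a) dvd p ^ e"
    using CHAR_dvd_CARD[where 'a = 'a] assms(2) by simp
  ultimately show ?thesis
    using assms(1) by (meson prime_dvd_power primes_dvd_imp_eq)
qed

lemma inj_power_CHAR_power:
  assumes "prime CHAR('a::idom)"
  shows "inj (\<lambda>x::'a. x ^ (CHAR('a) ^ e))"
proof (rule injI)
  fix x y :: 'a
  assume "x ^ (CHAR('a) ^ e) = y ^ (CHAR('a) ^ e)"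
  moreover have "x ^ (CHAR('a) ^ e) = y ^ (CHAR('a) ^ e) + (x - y) ^ (CHAR('a) ^ e)"
    using freshmans_dream'[OF assms refl, of y "x - y"] by simp
  ultimately show "x = y" by simp
qed

lemma power_mult_ord_eq_one:
  fixes a :: "'a::{field,finite}"
  assumes "a \<noteq> 0"
  shows "a ^ mult_ord a = 1"
proof -
  have "\<not> inj (\<lambda>i::nat. a ^ i)"
    using finite_imageD[of "\<lambda>i::nat. a ^ i" UNIV] by auto
  then obtain i j :: nat where "i < j" "a ^ i = a ^ j"
    using linorder_injI by blast
  then have "a ^ (j - i) = 1"
    using assms by (simp add: power_diff)
  with \<open>i < j\<close> have "\<exists>d. 0 < d \<and> a ^ d = 1"
    by (intro exI[of _ "j - i"]) simp
  then show ?thesis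
    unfolding mult_ord_def using LeastI_ex[where P = "\<lambda>d. 0 < d \<and> a ^ d = 1"] by auto
qed

lemma power_eq_self_if_mult_ord_dvd:
  fixes a :: "'a::{field,finite}"
  assumes "a \<noteq> 0" and "mult_ord a dvd N - 1" and "0 < N"
  shows "a ^ N = a"
proof -
  have "a ^ (N - 1) = 1"
    using assms(2) power_mult_ord_eq_one[OF assms(1)] by (auto elim!: dvdE simp: power_mult)
  then show ?thesis
    using power_Suc2[of a "N - 1"] assms(3) by simp
qed

lemma linearized_sum_power_shift:
  fixes a :: "'b \<Rightarrow> 'a::comm_semiring_1"
  assumes "prime CHAR('a)" and "Q = CHAR('a) ^ e"
    and "\<And>i. i \<in> A \<Longrightarrow> a i ^ (Q ^ s) = a i \<and> s \<le> r i"
  shows "(\<Sum>i\<in>A. a i * x ^ (Q ^ (r i - s))) ^ (Q ^ s) = (\<Sum>i\<in>A. a i * x ^ (Q ^ r i))"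
proof -
  have "Q ^ s = CHAR('a) ^ (e * s)"
    using assms(2) by (simp add: power_mult)
  then have "(\<Sum>i\<in>A. a i * x ^ (Q ^ (r i - s))) ^ (Q ^ s)
      = (\<Sum>i\<in>A. (a i * x ^ (Q ^ (r i - s))) ^ (Q ^ s))"
    using freshmans_dream_sum'[OF assms(1)] by simp
  also have "\<dots> = (\<Sum>i\<in>A. a i * x ^ (Q ^ r i))"
  proof (rule sum.cong[OF refl])
    fix i assume "i \<in> A"
    then have "a i ^ (Q ^ s) = a i" and "Q ^ (r i - s) * Q ^ s = Q ^ r i"
      using assms(3) by (auto simp flip: power_add)
    then show "(a i * x ^ (Q ^ (r i - s))) ^ (Q ^ s) = a i * x ^ (Q ^ r i)"
      by (simp add: power_mult_distrib flip: power_mult)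
  qed
  finally show ?thesis .
qed

lemma scattered_iff_power_shift:
  fixes S T :: "'a::field \<Rightarrow> 'a"
  assumes "inj (\<lambda>x::'a. x ^ (q ^ s))" and "\<And>y. S y = T y ^ (q ^ s)"
  shows "scattered q (t + s) S \<longleftrightarrow> scattered q t T"
proof -
  have quotient: "S y / y ^ (q ^ (t + s)) = (T y / y ^ (q ^ t)) ^ (q ^ s)" for y
    by (simp add: assms(2) power_add power_mult power_divide)
  have power_eq_iff: "u ^ (q ^ s) = v ^ (q ^ s) \<longleftrightarrow> u = v" for u v :: 'a
    using assms(1) by (auto dest: injD)
  have "S y / y ^ (q ^ (t + s)) = S z / z ^ (q ^ (t + s))
      \<longleftrightarrow> T y / y ^ (q ^ t) = T z / z ^ (q ^ t)" for y z
    by (simp only: quotient power_eq_iff)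
  then show ?thesis
    unfolding scattered_def by simp
qed

lemma first_le_if_Suc_less:
  fixes r :: "nat \<Rightarrow> 'b::order"
  assumes "\<forall>i\<in>{1..<k}. r i < r (Suc i)" and "1 \<le> i" and "i \<le> k"
  shows "r 1 \<le> r i"
  using assms(2)
proof (induction rule: dec_induct)
  case (step j)
  then show ?case
    using assms(1,3) order.strict_implies_order[of "r j" "r (Suc j)"] by force
qed simp

lemma scattered_linearized_iff_shifted:
  fixes a :: "'b \<Rightarrow> 'a::{field,finite}"
  assumes q: "q = CHAR('a) ^ e"
    and coeffs: "\<forall>i\<in>A. a i \<noteq> 0 \<and> mult_ord (a i) dvd q ^ s - 1 \<and> s \<le> r i"
  shows "scattered q (t + s) (\<lambda>x. \<Sum>i\<in>A. a i * x ^ (q ^ r i))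
    \<longleftrightarrow> scattered q t (\<lambda>x. \<Sum>i\<in>A. a i * x ^ (q ^ (r i - s)))"
proof (rule scattered_iff_power_shift)
  have char: "prime CHAR('a)"
    by (intro prime_CHAR_semidom finite_imp_CHAR_pos) simp
  then show "inj (\<lambda>x::'a. x ^ (q ^ s))"
    using inj_power_CHAR_power[where 'a = 'a, of "e * s"] q by (simp add: power_mult)
  have "q > 0"
    using q char prime_gt_0_nat by simp
  then have "a i ^ (q ^ s) = a i \<and> s \<le> r i" if "i \<in> A" for i
    using that coeffs power_eq_self_if_mult_ord_dvd[of "a i" "q ^ s"] by auto
  then show "(\<Sum>i\<in>A. a i * y ^ (q ^ r i)) = (\<Sum>i\<in>A. a i * y ^ (q ^ (r i - s))) ^ (q ^ s)" for y
    using linearized_sum_power_shift[OF char q, of A a s r y] by simp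
qed

theorem mainTheorem6:
  fixes q n k t :: nat and r :: "nat \<Rightarrow> nat" and a :: "nat \<Rightarrow> 'a::{field,finite}"
    and S :: "'a \<Rightarrow> 'a"
  assumes q_pow: "\<exists>p m. prime (p::nat) \<and> odd p \<and> 0 < m \<and> q = p ^ m"
    and card: "card (UNIV :: 'a set) = q ^ n"
    and k: "1 \<le> k"
    and r1: "0 < r 1"
    and r_mono: "\<forall>i\<in>{1..<k}. r i < r (Suc i)"
    and rk: "r k < n"
    and a_nz: "\<forall>i\<in>{1..k}. a i \<noteq> 0"
    and t: "0 < t" "t < n"
    and S_def: "S = (\<lambda>x. \<Sum>i=1..k. a i * x ^ (q ^ r i))"
  shows "(t < r 1 \<and> (\<forall>i\<in>{1..k}. mult_ord (a i) dvd q ^ t - 1) \<longrightarrow>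
            (scattered q t S \<longleftrightarrow>
             scattered q 0 (\<lambda>x. \<Sum>i=1..k. a i * x ^ (q ^ (r i - t)))))
       \<and> (r 1 < t \<and> (\<forall>i\<in>{1..k}. mult_ord (a i) dvd q ^ (r 1) - 1) \<longrightarrow>
            (scattered q t S \<longleftrightarrow>
             scattered q (t - r 1) (\<lambda>x. a 1 * x + (\<Sum>i=2..k. a i * x ^ (q ^ (r i - r 1))))))"
proof -
  obtain p m where p: "prime p" "q = p ^ m"
    using q_pow by blast
  have q_char: "q = CHAR('a) ^ m"
    using CHAR_eq_prime_of_card_eq_power[where 'a = 'a, OF p(1)] card p(2)
    by (simp flip: power_mult)
  have r_ge: "r 1 \<le> r i" if "i \<in> {1..k}" for i
    using first_le_if_Suc_less[OF r_mono] that by simp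
  have T_eq: "(\<lambda>x. a 1 * x + (\<Sum>i=2..k. a i * x ^ (q ^ (r i - r 1))))
      = (\<lambda>x. \<Sum>i=1..k. a i * x ^ (q ^ (r i - r 1)))"
    using k by (simp add: sum.atLeast_Suc_atMost numeral_2_eq_2)
  show ?thesis
  proof (intro conjI impI)
    assume "t < r 1 \<and> (\<forall>i\<in>{1..k}. mult_ord (a i) dvd q ^ t - 1)"
    then have "\<forall>i\<in>{1..k}. a i \<noteq> 0 \<and> mult_ord (a i) dvd q ^ t - 1 \<and> t \<le> r i"
      using a_nz r_ge by fastforce
    from scattered_linearized_iff_shifted[OF q_char this, of 0]
    show "scattered q t S \<longleftrightarrow> scattered q 0 (\<lambda>x. \<Sum>i=1..k. a i * x ^ (q ^ (r i - t)))"
      unfolding S_def by simp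
  next
    assume h: "r 1 < t \<and> (\<forall>i\<in>{1..k}. mult_ord (a i) dvd q ^ (r 1) - 1)"
    then have "\<forall>i\<in>{1..k}. a i \<noteq> 0 \<and> mult_ord (a i) dvd q ^ r 1 - 1 \<and> r 1 \<le> r i"
      using a_nz r_ge by blast
    from scattered_linearized_iff_shifted[OF q_char this, of "t - r 1"]
    show "scattered q t S \<longleftrightarrow>
        scattered q (t - r 1) (\<lambda>x. a 1 * x + (\<Sum>i=2..k. a i * x ^ (q ^ (r i - r 1))))"
      unfolding S_def T_eq using h by simp
  qed
qed

end
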